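(* Let $k=\mathbf{F}_q$, $F=k((\epsilon))$, $\mathcal{O}=k[[\epsilon]]$, $G=\mathrm{GL}_3$, $K=G(\mathcal{O})$, and let $U_0$ be the group of upper unitriangular $3\times 3$ matrices. Let $\mathbf{i}$ be one of the two reduced words $(1,2,1)$ or $(2,1,2)$ of the longest element $w_0$ of the Weyl group $S_3$. Then for every $u\in U_0(F)$ there exists $(t_1,t_2,t_3)\in F^3$ such that $\mathbf{y}_{\mathbf{i}}(t_1,t_2,t_3)$ is defined and $$uK=\mathbf{y}_{\mathbf{i}}(t_1,t_2,t_3)^{-1}K \quad\text{in } G(F)/K .$$
   Context: For $i=1,2$ let $\mathbf{x}_i(t)=1+tE_{i,i+1}\in U_0$ (with $E_{a,b}$ the elementary matrix), and for a reduced word $\mathbf{i}=(i_1,i_2,i_3)$ put $\mathbf{x}_{\mathbf{i}}(t_1,t_2,t_3)=\mathbf{x}_{i_3}(t_3)\mathbf{x}_{i_2}(t_2)\mathbf{x}_{i_1}(t_1)$. For a matrix $g$ admitting a Gaussian decomposition $g=vtu$ with $v$ lower unitriangular, $t$ diagonal, $u$ upper unitriangular, write $[g]_+=u$. Let $\bar s_i$ be the image of $\begin{bmatrix}0&1\\-1&0\end{bmatrix}$ under the embedding of $\mathrm{SL}_2$ in $G$ in rows/columns $i,i+1$, and $\bar w_0=\bar s_1\bar s_2\bar s_1$. The map $\eta(y)=[\bar w_0 y^{t}]_+$ ($y^t$ the transpose) is a birational automorphism of $U_0$; define the rational map $\mathbf{y}_{\mathbf{i}}=\eta^{-1}\circ\mathbf{x}_{\mathbf{i}}$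 (Berenstein–Fomin–Zelevinsky parametrization), applied over the field $F$. *)

theory Defs
  imports "HOL-Analysis.Analysis" "HOL-Library.Numeral_Type"
          "HOL-Computational_Algebra.Formal_Laurent_Series"
begin

text \<open>Matrices in GL_3 are modelled as elements of 'a^3^3; rows/columns
 1,2,3 of the paper correspond to the indices 0,1,2 of the numeral type 3.\<close>

definition ix :: "nat \<Rightarrow> 3" where
  "ix r = of_nat (r - 1)"

definition elem :: "nat \<Rightarrow> nat \<Rightarrow> 'a::semiring_1^3^3" where
  "elem a b = (\<chi> i j. if i = ix a \<and> j = ix b then 1 else 0)"

definition upper_uni :: "'a::semiring_1^3^3 \<Rightarrow> bool" where
  "upper_uni A \<longleftrightarrow> (\<forall>i j. (i = j \<longrightarrow> A$i$j = 1) \<and> (j < i \<longrightarrow> A$i$j = 0))"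

definition lower_uni :: "'a::semiring_1^3^3 \<Rightarrow> bool" where
  "lower_uni A \<longleftrightarrow> (\<forall>i j. (i = j \<longrightarrow> A$i$j = 1) \<and> (i < j \<longrightarrow> A$i$j = 0))"

definition diagonal :: "'a::semiring_1^3^3 \<Rightarrow> bool" where
  "diagonal A \<longleftrightarrow> (\<forall>i j. i \<noteq> j \<longrightarrow> A$i$j = 0)"

definition U0 :: "('a::semiring_1^3^3) set" where
  "U0 = {A. upper_uni A}"

definition xgen :: "nat \<Rightarrow> 'a::semiring_1 \<Rightarrow> 'a^3^3" where
  "xgen i t = mat 1 + (\<chi> a b. t * elem i (i+1) $ a $ b)"

definition xword :: "nat \<times> nat \<times> nat \<Rightarrow> 'a::semiring_1 \<Rightarrow> 'a \<Rightarrow> 'a \<Rightarrow> 'a^3^3" where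
  "xword w t1 t2 t3 = (case w of (i1, i2, i3) \<Rightarrow> xgen i3 t3 ** xgen i2 t2 ** xgen i1 t1)"

definition gauss_decomp :: "'a::semiring_1^3^3 \<Rightarrow> 'a^3^3 \<Rightarrow> 'a^3^3 \<Rightarrow> 'a^3^3 \<Rightarrow> bool" where
  "gauss_decomp g v t u \<longleftrightarrow> lower_uni v \<and> diagonal t \<and> upper_uni u \<and> g = v ** t ** u"

definition gauss_plus :: "'a::semiring_1^3^3 \<Rightarrow> ('a^3^3) option" where
  "gauss_plus g = (if \<exists>v t u. gauss_decomp g v t u
      then Some (THE u. \<exists>v t. gauss_decomp g v t u) else None)"

text \<open>\<bar>s_i: image of [[0,1],[-1,0]] in rows/columns i,i+1 (1-based).\<close>
definition sbar :: "nat \<Rightarrow> 'a::ring_1^3^3" where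
  "sbar i = (\<chi> a b. if a = ix i \<and> b = ix (i+1) then 1
                   else if a = ix (i+1) \<and> b = ix i then -1
                   else if a = b \<and> a \<noteq> ix i \<and> a \<noteq> ix (i+1) then 1 else 0)"

definition w0bar :: "'a::ring_1^3^3" where
  "w0bar = sbar 1 ** sbar 2 ** sbar 1"

definition eta :: "'a::ring_1^3^3 \<Rightarrow> ('a^3^3) option" where
  "eta y = gauss_plus (w0bar ** transpose y)"

text \<open>The inverse of the birational automorphism \<eta> of U_0: defined at x iff
  x = \<eta>(y) for some y in U_0 at which \<eta> is defined (such y is unique).\<close>
definition eta_inv :: "'a::ring_1^3^3 \<Rightarrow> ('a^3^3) option" where
  "eta_inv x = (if \<exists>y \<in> U0. eta y = Some x
      then Some (THE y. y \<in> U0 \<and> eta y = Some x) else None)"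

definition ybfz :: "nat \<times> nat \<times> nat \<Rightarrow> 'a::ring_1 \<Rightarrow> 'a \<Rightarrow> 'a \<Rightarrow> ('a^3^3) option" where
  "ybfz w t1 t2 t3 = eta_inv (xword w t1 t2 t3)"

definition laurentO :: "('k::zero fls) set" where
  "laurentO = {f. \<forall>n<0. fls_nth f n = 0}"

definition GL3O :: "('k::field fls^3^3) set" where
  "GL3O = {A. (\<forall>i j. A$i$j \<in> laurentO) \<and> invertible A
              \<and> (\<forall>i j. matrix_inv A $i$j \<in> laurentO)}"

end

theory Submission
  imports Defs
begin

text \<open>Write \<open>unitri p q r\<close> for the upper unitriangular matrix with entries \<open>p, q, r\<close> at
  positions (1,2), (2,3), (1,3). An explicit Gaussian decomposition of \<open>w\<^sub>0 y\<^sup>t\<close> shows that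
  \<open>\<eta>(unitri a c b)\<close> is defined iff \<open>b \<noteq> 0\<close> and \<open>a c \<noteq> b\<close>, with value
  \<open>unitri (c/b) (a/(a c - b)) (1/b)\<close>, and that \<open>\<eta>\<close> is injective there. Comparing with
  \<open>x\<^sub>i(t\<^sub>1,t\<^sub>2,t\<^sub>3)\<close>, the map \<open>y\<^sub>i\<close> attains every \<open>unitri a c b\<close> with \<open>b \<noteq> 0\<close>, \<open>a c \<noteq> b\<close>
  and \<open>a c \<noteq> 0\<close>. Since \<open>uK\<close> only changes by right multiplication with \<open>U\<^sub>0(\<O>)\<close>, it remains to
  find \<open>v \<in> U\<^sub>0(\<O>)\<close> with \<open>y = v u\<^sup>-\<^sup>1\<close> in that set: the superdiagonal entries of \<open>v\<close> are
  taken from \<open>{0, 1}\<close> and its corner entry from \<open>{0, 1, \<epsilon>}\<close>, which avoids the two forbidden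
  values of \<open>b\<close>.\<close>

lemma exhaust_3_zero_based: fixes x :: 3 shows "x = 0 \<or> x = 1 \<or> x = 2"
  using exhaust_3[of x] by auto

lemma UNIV_3_zero_based: "(UNIV :: 3 set) = {0, 1, 2}"
  using exhaust_3_zero_based by auto

lemma sum_3_zero_based: "sum f (UNIV :: 3 set) = f 0 + f 1 + f 2"
  unfolding UNIV_3_zero_based by (simp add: ac_simps)

lemma mat3_eq_iff: "(A :: 'a^3^3) = B \<longleftrightarrow> (\<forall>i\<in>{0,1,2}. \<forall>j\<in>{0,1,2}. A$i$j = B$i$j)"
  by (metis UNIV_3_zero_based UNIV_I vec_eq_iff)

lemma less_3_simps [simp]:
  "(0::3) < 1" "(0::3) < 2" "(1::3) < 2" "\<not> (1::3) < 0" "\<not> (2::3) < 0" "\<not> (2::3) < 1"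
  by (simp_all add: less_bit1_def bit1.Rep_0 bit1.Rep_1 bit1.Rep_numeral)

lemma ix_simps [simp]: "ix 1 = 0" "ix 2 = 1" "ix 3 = 2" "ix (Suc 0) = 0" "ix (Suc (Suc 0)) = 1"
  by (simp_all add: ix_def)

definition unitri :: "'a::ring_1 \<Rightarrow> 'a \<Rightarrow> 'a \<Rightarrow> 'a^3^3" where
  "unitri p q r = (\<chi> i j. if i = j then 1 else if i = 0 \<and> j = 1 then p
      else if i = 1 \<and> j = 2 then q else if i = 0 \<and> j = 2 then r else 0)"

definition lowtri :: "'a::ring_1 \<Rightarrow> 'a \<Rightarrow> 'a \<Rightarrow> 'a^3^3" where
  "lowtri p q r = (\<chi> i j. if i = j then 1 else if i = 1 \<and> j = 0 then p
      else if i = 2 \<and> j = 0 then q else if i = 2 \<and> j = 1 then r else 0)"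

definition diag3 :: "'a::ring_1 \<Rightarrow> 'a \<Rightarrow> 'a \<Rightarrow> 'a^3^3" where
  "diag3 p q r = (\<chi> i j. if i = j \<and> i = 0 then p else if i = j \<and> i = 1 then q
      else if i = j \<and> i = 2 then r else 0)"

lemma unitri_mult: "unitri p q r ** unitri p' q' r' = unitri (p + p') (q + q') (r + p * q' + r')"
  by (simp add: mat3_eq_iff matrix_matrix_mult_def sum_3_zero_based unitri_def)

lemma unitri_0: "unitri 0 0 0 = mat 1"
  by (simp add: mat3_eq_iff unitri_def mat_def)

lemma unitri_eq_iff: "unitri p q r = unitri p' q' r' \<longleftrightarrow> p = p' \<and> q = q' \<and> r = r'"
  by (auto simp: mat3_eq_iff unitri_def)

lemma upper_uni_unitri: "upper_uni (unitri p q r)"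
  unfolding upper_uni_def
proof (intro allI conjI impI)
  fix i j :: 3
  show "i = j \<Longrightarrow> unitri p q r $ i $ j = 1" by (simp add: unitri_def)
  show "j < i \<Longrightarrow> unitri p q r $ i $ j = 0"
    using exhaust_3_zero_based[of i] exhaust_3_zero_based[of j] by (elim disjE) (simp_all add: unitri_def)
qed

lemma upper_uni_eq_unitri:
  assumes "upper_uni (A :: 'a::ring_1^3^3)"
  shows "A = unitri (A$0$1) (A$1$2) (A$0$2)"
  using assms unfolding upper_uni_def mat3_eq_iff unitri_def by auto

lemma U0_iff_unitri: "A \<in> U0 \<longleftrightarrow> (\<exists>p q r. A = unitri p q r)"
  unfolding U0_def using upper_uni_eq_unitri upper_uni_unitri by blast

lemma unitri_in_U0: "unitri p q r \<in> U0"
  using U0_iff_unitri by blast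

lemma lower_uni_eq_lowtri:
  assumes "lower_uni (A :: 'a::ring_1^3^3)"
  shows "A = lowtri (A$1$0) (A$2$0) (A$2$1)"
  using assms unfolding lower_uni_def mat3_eq_iff lowtri_def by auto

lemma lower_uni_lowtri: "lower_uni (lowtri p q r)"
  unfolding lower_uni_def
proof (intro allI conjI impI)
  fix i j :: 3
  show "i = j \<Longrightarrow> lowtri p q r $ i $ j = 1" by (simp add: lowtri_def)
  show "i < j \<Longrightarrow> lowtri p q r $ i $ j = 0"
    using exhaust_3_zero_based[of i] exhaust_3_zero_based[of j] by (elim disjE) (simp_all add: lowtri_def)
qed

lemma diagonal_eq_diag3:
  assumes "diagonal (A :: 'a::ring_1^3^3)"
  shows "A = diag3 (A$0$0) (A$1$1) (A$2$2)"
  using assms unfolding diagonal_def mat3_eq_iff diag3_def by auto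

lemma diagonal_diag3: "diagonal (diag3 p q r)"
  unfolding diagonal_def by (simp add: diag3_def)

lemma lowtri_diag3_unitri_mult: "lowtri l1 l2 l3 ** diag3 d0 d1 d2 ** unitri p q r =
  (\<chi> i j. if i = 0 \<and> j = 0 then d0 else if i = 0 \<and> j = 1 then d0*p
     else if i = 0 \<and> j = 2 then d0*r else if i = 1 \<and> j = 0 then l1*d0
     else if i = 1 \<and> j = 1 then l1*d0*p + d1 else if i = 1 \<and> j = 2 then l1*d0*r + d1*q
     else if i = 2 \<and> j = 0 then l2*d0 else if i = 2 \<and> j = 1 then l2*d0*p + l3*d1
     else l2*d0*r + l3*d1*q + d2)"
  by (simp add: mat3_eq_iff matrix_matrix_mult_def sum_3_zero_based lowtri_def diag3_def unitri_def)

definition w0_transpose_unitri :: "'a::ring_1 \<Rightarrow> 'a \<Rightarrow> 'a \<Rightarrow> 'a^3^3" where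
  "w0_transpose_unitri a b c = (\<chi> i j. if i = 0 \<and> j = 0 then b else if i = 0 \<and> j = 1 then c
     else if i = 0 \<and> j = 2 then 1 else if i = 1 \<and> j = 0 then -a else if i = 1 \<and> j = 1 then -1
     else if i = 2 \<and> j = 0 then 1 else 0)"

lemma w0bar_transpose_unitri: "w0bar ** transpose (unitri a c b) = w0_transpose_unitri a b c"
  by (simp add: mat3_eq_iff w0bar_def sbar_def w0_transpose_unitri_def matrix_matrix_mult_def
      sum_3_zero_based transpose_def unitri_def)

lemma gauss_decomp_w0_transpose_unitri_unique:
  fixes a b c :: "'a::field"
  assumes "gauss_decomp (w0_transpose_unitri a b c) v t u"
  shows "b \<noteq> 0 \<and> a * c \<noteq> b \<and> u = unitri (c/b) (a/(a*c - b)) (1/b)"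
proof -
  define l1 l2 l3 d0 d1 d2 p q r where "l1 = v$1$0" "l2 = v$2$0" "l3 = v$2$1"
    "d0 = t$0$0" "d1 = t$1$1" "d2 = t$2$2" "p = u$0$1" "q = u$1$2" "r = u$0$2"
  have "v = lowtri l1 l2 l3" "t = diag3 d0 d1 d2" and U: "u = unitri p q r"
    using assms lower_uni_eq_lowtri diagonal_eq_diag3 upper_uni_eq_unitri
    unfolding gauss_decomp_def l1_l2_l3_d0_d1_d2_p_q_r_def by blast+
  then have "w0_transpose_unitri a b c = lowtri l1 l2 l3 ** diag3 d0 d1 d2 ** unitri p q r"
    using assms unfolding gauss_decomp_def by simp
  then have entry: "\<And>i j. w0_transpose_unitri a b c $ i $ j
      = (lowtri l1 l2 l3 ** diag3 d0 d1 d2 ** unitri p q r) $ i $ j"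
    by simp
  note entry_simps = lowtri_diag3_unitri_mult w0_transpose_unitri_def
  have e00: "b = d0" using entry[of 0 0] by (simp add: entry_simps)
  have e01: "c = d0*p" using entry[of 0 1] by (simp add: entry_simps)
  have e02: "1 = d0*r" using entry[of 0 2] by (simp add: entry_simps)
  have e10: "-a = l1*d0" using entry[of 1 0] by (simp add: entry_simps)
  have e11: "-1 = l1*d0*p + d1" using entry[of 1 1] by (simp add: entry_simps)
  have e12: "0 = l1*d0*r + d1*q" using entry[of 1 2] by (simp add: entry_simps)
  have e20: "1 = l2*d0" using entry[of 2 0] by (simp add: entry_simps)
  have e21: "0 = l2*d0*p + l3*d1" using entry[of 2 1] by (simp add: entry_simps)
  have b0: "b \<noteq> 0" using e00 e02 by (metis mult_zero_left zero_neq_one)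
  have d1: "d1 \<noteq> 0"
  proof
    assume "d1 = 0"
    moreover from this have "p = 0" using e20 e21 by (metis add.right_neutral mult_1 mult_zero_right)
    ultimately show False using e11 by simp
  qed
  have "p = c/b" "r = 1/b" "l1 = -a/b" using e00 e01 e02 e10 b0 by (simp_all add: field_simps)
  moreover from this have "d1 = (a*c - b)/b" using e11 e00 b0 by (simp add: field_simps)
  moreover from this have "a * c \<noteq> b" using d1 by auto
  ultimately have "q = a/(a*c - b)" "a * c \<noteq> b" using e12 e00 b0 by (auto simp: field_simps)
  then show ?thesis using U b0 \<open>p = c/b\<close> \<open>r = 1/b\<close> by simp
qed

lemma gauss_decomp_w0_transpose_unitri:
  fixes a b c :: "'a::field"
  assumes "b \<noteq> 0" "a * c \<noteq> b"
  shows "gauss_decomp (w0_transpose_unitri a b c)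
           (lowtri (-a/b) (1/b) (-c/(a*c - b))) (diag3 b ((a*c - b)/b) (1/(a*c - b)))
           (unitri (c/b) (a/(a*c - b)) (1/b))"
  using assms unfolding gauss_decomp_def
  by (simp add: lower_uni_lowtri diagonal_diag3 upper_uni_unitri lowtri_diag3_unitri_mult
      w0_transpose_unitri_def mat3_eq_iff) (simp add: field_simps)

lemma eta_unitri: "eta (unitri a c b :: 'a::field^3^3) =
   (if b \<noteq> 0 \<and> a * c \<noteq> b then Some (unitri (c/b) (a/(a*c - b)) (1/b)) else None)"
proof (cases "b \<noteq> 0 \<and> a * c \<noteq> b")
  case True
  then have "(THE u. \<exists>v t. gauss_decomp (w0_transpose_unitri a b c) v t u)
      = unitri (c/b) (a/(a*c - b)) (1/b)"
    using gauss_decomp_w0_transpose_unitri gauss_decomp_w0_transpose_unitri_unique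
    by (intro the_equality) blast+
  then show ?thesis
    using True gauss_decomp_w0_transpose_unitri[of b a c]
    unfolding eta_def w0bar_transpose_unitri gauss_plus_def by auto
next
  case False
  then have "\<nexists>v t u. gauss_decomp (w0_transpose_unitri a b c) v t u"
    using gauss_decomp_w0_transpose_unitri_unique by blast
  then show ?thesis
    using False unfolding eta_def w0bar_transpose_unitri gauss_plus_def by auto
qed

lemma eta_unitri_inj:
  fixes a b c a' b' c' :: "'a::field"
  assumes "b \<noteq> 0" "a * c \<noteq> b" "b' \<noteq> 0" "a' * c' \<noteq> b'"
    and "unitri (c/b) (a/(a*c - b)) (1/b) = unitri (c'/b') (a'/(a'*c' - b')) (1/b')"
  shows "a = a' \<and> b = b' \<and> c = c'"
proof -
  have "c/b = c'/b'" "a/(a*c - b) = a'/(a'*c' - b')" "1/b = 1/b'"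
    using assms(5) unfolding unitri_eq_iff by auto
  moreover from this have "b = b'" "c = c'" using assms(1) by (simp_all add: field_simps)
  ultimately have "a * (a'*c - b) = a' * (a*c - b)" using assms by (simp add: field_simps)
  then have "a * b = a' * b" by (auto simp: algebra_simps)
  then show ?thesis using assms(1) \<open>b = b'\<close> \<open>c = c'\<close> by simp
qed

lemma eta_inv_unitri:
  fixes a b c :: "'a::field"
  assumes "b \<noteq> 0" "a * c \<noteq> b"
  shows "eta_inv (unitri (c/b) (a/(a*c - b)) (1/b)) = Some (unitri a c b)"
proof -
  let ?x = "unitri (c/b) (a/(a*c - b)) (1/b)"
  have eta_y: "eta (unitri a c b) = Some ?x" using assms by (simp add: eta_unitri)
  have "(THE y. y \<in> U0 \<and> eta y = Some ?x) = unitri a c b"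
  proof (rule the_equality)
    show "unitri a c b \<in> U0 \<and> eta (unitri a c b) = Some ?x"
      using eta_y unitri_in_U0 by blast
  next
    fix y assume y: "y \<in> U0 \<and> eta y = Some ?x"
    then obtain a' c' b' where y_eq: "y = unitri a' c' b'" using U0_iff_unitri by blast
    with y have "b' \<noteq> 0" "a' * c' \<noteq> b'" "?x = unitri (c'/b') (a'/(a'*c' - b')) (1/b')"
      by (simp_all add: eta_unitri split: if_splits)
    then show "y = unitri a c b" using eta_unitri_inj[OF assms] y_eq by auto
  qed
  moreover have "\<exists>y \<in> U0. eta y = Some ?x" using eta_y unitri_in_U0 by blast
  ultimately show ?thesis unfolding eta_inv_def by simp
qed

lemma xgen_1: "xgen 1 t = unitri t 0 0"
  by (simp add: mat3_eq_iff unitri_def xgen_def elem_def mat_def)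

lemma xgen_2: "xgen 2 t = unitri 0 t 0"
  by (simp add: mat3_eq_iff unitri_def xgen_def elem_def mat_def)

lemma xword_121: "xword (1,2,1) t1 t2 t3 = unitri (t1 + t3) t2 (t3 * t2)"
  unfolding xword_def by (simp only: prod.case xgen_1 xgen_2 unitri_mult) (simp add: algebra_simps)

lemma xword_212: "xword (2,1,2) t1 t2 t3 = unitri t2 (t1 + t3) (t2 * t1)"
  unfolding xword_def by (simp only: prod.case xgen_1 xgen_2 unitri_mult) (simp add: algebra_simps)

lemma ybfz_121_attains:
  fixes a b c :: "'a::field"
  assumes "b \<noteq> 0" "a * c \<noteq> b" "a \<noteq> 0"
  shows "ybfz (1,2,1) (c/b - (a*c - b)/(a*b)) (a/(a*c - b)) ((a*c - b)/(a*b)) = Some (unitri a c b)"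
proof -
  have "xword (1,2,1) (c/b - (a*c - b)/(a*b)) (a/(a*c - b)) ((a*c - b)/(a*b))
      = unitri (c/b) (a/(a*c - b)) (1/b)"
    using assms unfolding xword_121 unitri_eq_iff by (simp add: field_simps)
  then show ?thesis unfolding ybfz_def using eta_inv_unitri[OF assms(1,2)] by simp
qed

lemma ybfz_212_attains:
  fixes a b c :: "'a::field"
  assumes "b \<noteq> 0" "a * c \<noteq> b" "c \<noteq> 0"
  shows "ybfz (2,1,2) (1/c) (c/b) (a/(a*c - b) - 1/c) = Some (unitri a c b)"
proof -
  have "xword (2,1,2) (1/c) (c/b) (a/(a*c - b) - 1/c) = unitri (c/b) (a/(a*c - b)) (1/b)"
    using assms unfolding xword_212 unitri_eq_iff by (simp add: field_simps)
  then show ?thesis unfolding ybfz_def using eta_inv_unitri[OF assms(1,2)] by simp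
qed

lemma laurentO_eq_range: "laurentO = range fps_to_fls"
proof (intro set_eqI iffI)
  fix f :: "'a fls"
  assume "f \<in> laurentO"
  then have "0 \<le> fls_subdegree f" unfolding laurentO_def by (intro fls_subdegree_ge0I) auto
  then show "f \<in> range fps_to_fls" using fls_regpart_to_fls_trivial by (metis rangeI)
qed (auto simp: laurentO_def)

lemma laurentO_closed:
  fixes f g :: "'a::comm_ring_1 fls"
  assumes "f \<in> laurentO" "g \<in> laurentO"
  shows "f + g \<in> laurentO" "f * g \<in> laurentO" "f - g \<in> laurentO" "- f \<in> laurentO"
  using assms unfolding laurentO_eq_range
  by (auto simp flip: fps_to_fls_plus fls_times_fps_to_fls fps_to_fls_minus fps_to_fls_uminus)

lemma laurentO_consts: "0 \<in> laurentO" "1 \<in> laurentO" "fls_X \<in> laurentO"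
  by (simp_all add: laurentO_def)

lemma fls_X_neq_1: "(fls_X :: 'a::zero_neq_one fls) \<noteq> 1"
proof
  assume "fls_X = (1 :: 'a fls)"
  then have "fls_subdegree (fls_X :: 'a fls) = fls_subdegree (1 :: 'a fls)" by (rule arg_cong)
  then show False by simp
qed

lemma matrix_inv_mult:
  fixes M :: "'a::semiring_1^'n^'n"
  assumes "invertible M"
  shows "M ** matrix_inv M = mat 1" "matrix_inv M ** M = mat 1"
  using someI_ex[OF assms[unfolded invertible_def]] unfolding matrix_inv_def by auto

lemma matrix_inv_unique:
  fixes M N :: "'a::semiring_1^'n^'n"
  assumes "M ** N = mat 1" "N ** M = mat 1"
  shows "matrix_inv M = N"
proof -
  have inv: "invertible M" using assms unfolding invertible_def by blast
  have "matrix_inv M = (N ** M) ** matrix_inv M" using assms by simp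
  also have "\<dots> = N" using matrix_inv_mult[OF inv] by (simp flip: matrix_mul_assoc)
  finally show ?thesis .
qed

lemma GL3O_iff: "(A :: 'k::field fls^3^3) \<in> GL3O \<longleftrightarrow> (\<exists>B. A ** B = mat 1 \<and> B ** A = mat 1 \<and>
    (\<forall>i j. A$i$j \<in> laurentO) \<and> (\<forall>i j. B$i$j \<in> laurentO))"
proof
  assume "A \<in> GL3O"
  then show "\<exists>B. A ** B = mat 1 \<and> B ** A = mat 1 \<and>
      (\<forall>i j. A$i$j \<in> laurentO) \<and> (\<forall>i j. B$i$j \<in> laurentO)"
    unfolding GL3O_def using matrix_inv_mult by blast
next
  assume "\<exists>B. A ** B = mat 1 \<and> B ** A = mat 1 \<and>
      (\<forall>i j. A$i$j \<in> laurentO) \<and> (\<forall>i j. B$i$j \<in> laurentO)"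
  then obtain B :: "'k fls^3^3" where "A ** B = mat 1" "B ** A = mat 1"
      "\<forall>i j. A$i$j \<in> laurentO" "\<forall>i j. B$i$j \<in> laurentO"
    by blast
  moreover from this have "matrix_inv A = B" by (intro matrix_inv_unique)
  ultimately show "A \<in> GL3O" unfolding GL3O_def invertible_def by auto
qed

lemma matrix_mult_laurentO:
  fixes A B :: "'a::comm_ring_1 fls^3^3"
  assumes "\<forall>i j. A$i$j \<in> laurentO" "\<forall>i j. B$i$j \<in> laurentO"
  shows "\<forall>i j. (A ** B)$i$j \<in> laurentO"
  using assms by (simp add: matrix_matrix_mult_def sum_3_zero_based laurentO_closed)

lemma GL3O_mult:
  fixes A B :: "'k::field fls^3^3"
  assumes "A \<in> GL3O" "B \<in> GL3O"
  shows "A ** B \<in> GL3O"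
proof -
  obtain A' B' :: "'k fls^3^3" where A': "A ** A' = mat 1" "A' ** A = mat 1" "\<forall>i j. A'$i$j \<in> laurentO"
    and B': "B ** B' = mat 1" "B' ** B = mat 1" "\<forall>i j. B'$i$j \<in> laurentO"
    and "\<forall>i j. A$i$j \<in> laurentO" "\<forall>i j. B$i$j \<in> laurentO"
    using assms unfolding GL3O_iff by blast
  moreover have "A ** B ** (B' ** A') = mat 1" "B' ** A' ** (A ** B) = mat 1"
    using A'(1,2) B'(1,2) by (metis matrix_mul_assoc matrix_mul_rid)+
  moreover have "\<forall>i j. (A ** B)$i$j \<in> laurentO" "\<forall>i j. (B' ** A')$i$j \<in> laurentO"
    using calculation by (simp_all add: matrix_mult_laurentO)
  ultimately show ?thesis unfolding GL3O_iff by blast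
qed

lemma GL3O_matrix_inv:
  fixes A :: "'k::field fls^3^3"
  assumes "A \<in> GL3O"
  shows "matrix_inv A \<in> GL3O"
proof -
  obtain B :: "'k fls^3^3" where AB: "A ** B = mat 1" "B ** A = mat 1"
    and "\<forall>i j. A$i$j \<in> laurentO" "\<forall>i j. B$i$j \<in> laurentO"
    using assms unfolding GL3O_iff by blast
  moreover from AB have "matrix_inv A = B" by (rule matrix_inv_unique)
  ultimately show ?thesis unfolding GL3O_iff by blast
qed

lemma GL3O_coset_eq:
  fixes A B v :: "'k::field fls^3^3"
  assumes "A = B ** v" "v \<in> GL3O"
  shows "(\<lambda>k. A ** k) ` GL3O = (\<lambda>k. B ** k) ` GL3O"
proof -
  have "v ** matrix_inv v = mat 1" using assms(2) matrix_inv_mult unfolding GL3O_def by blast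
  then have "B = A ** matrix_inv v" using assms(1) by (metis matrix_mul_assoc matrix_mul_rid)
  show ?thesis
  proof (intro equalityI image_subsetI)
    fix k :: "'k fls^3^3" assume "k \<in> GL3O"
    then have "v ** k \<in> GL3O" "matrix_inv v ** k \<in> GL3O"
      using assms(2) GL3O_mult GL3O_matrix_inv by blast+
    moreover have "A ** k = B ** (v ** k)" "B ** k = A ** (matrix_inv v ** k)"
      using assms(1) \<open>B = A ** matrix_inv v\<close> by (simp_all add: matrix_mul_assoc)
    ultimately show "A ** k \<in> (\<lambda>k. B ** k) ` GL3O" "B ** k \<in> (\<lambda>k. A ** k) ` GL3O"
      by blast+
  qed
qed

lemma unitri_mult_inverse:
  "unitri p q r ** unitri (-p) (-q) (p*q - r) = mat 1"
  "unitri (-p) (-q) (p*q - r) ** unitri p q r = mat 1"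
  by (simp_all add: unitri_mult flip: unitri_0)

lemma matrix_inv_unitri: "matrix_inv (unitri p q r) = unitri (-p) (-q) (p*q - r)"
  using unitri_mult_inverse by (rule matrix_inv_unique)

lemma unitri_GL3O:
  assumes "p \<in> laurentO" "q \<in> laurentO" "r \<in> laurentO"
  shows "unitri p q r \<in> GL3O"
  unfolding GL3O_iff
proof (intro exI conjI)
  show "unitri p q r ** unitri (-p) (-q) (p*q - r) = mat 1"
    "unitri (-p) (-q) (p*q - r) ** unitri p q r = mat 1"
    by (fact unitri_mult_inverse)+
  show "\<forall>i j. unitri p q r $ i $ j \<in> laurentO"
    "\<forall>i j. unitri (-p) (-q) (p*q - r) $ i $ j \<in> laurentO"
    using assms by (simp_all add: unitri_def laurentO_consts laurentO_closed)
qed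

lemma add_avoids_two_values:
  fixes x1 x2 x3 b c d :: "'a::cancel_semigroup_add"
  assumes "x1 \<noteq> x2" "x1 \<noteq> x3" "x2 \<noteq> x3"
  shows "\<exists>x\<in>{x1, x2, x3}. x + b \<noteq> c \<and> x + b \<noteq> d"
  using assms by (metis add_right_cancel insertCI)

theorem mainTheorem1:
  fixes u :: "'k::{field,finite} fls^3^3" and w :: "nat \<times> nat \<times> nat"
  assumes "w \<in> {(1,2,1), (2,1,2)}" and "u \<in> U0"
  shows "\<exists>t1 t2 t3 y. ybfz w t1 t2 t3 = Some y \<and>
           (\<lambda>k. u ** k) ` GL3O = (\<lambda>k. matrix_inv y ** k) ` GL3O"
proof -
  obtain p q r where u: "u = unitri p q r" using assms(2) U0_iff_unitri by blast
  obtain x s :: "'k fls" where xs: "x \<in> {0, 1}" "s \<in> {0, 1}" "x \<noteq> p" "s \<noteq> q"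
    by (metis insertCI zero_neq_one)
  define a c where "a = x - p" "c = s - q"
  have "\<exists>z\<in>{0, 1, fls_X}. z + (p*q - r - x*q) \<noteq> 0 \<and> z + (p*q - r - x*q) \<noteq> a*c"
    by (intro add_avoids_two_values) (use fls_X_neq_1 in auto)
  then obtain z where z: "z \<in> {0, 1, fls_X}"
      "z + (p*q - r - x*q) \<noteq> 0" "z + (p*q - r - x*q) \<noteq> a*c"
    by blast
  define b where "b = z + (p*q - r - x*q)"
  have nz: "a \<noteq> 0" "c \<noteq> 0" "b \<noteq> 0" "a * c \<noteq> b" using xs z by (auto simp: a_c_def b_def)
  have "\<exists>t1 t2 t3. ybfz w t1 t2 t3 = Some (unitri a c b)"
    using assms(1) ybfz_121_attains[OF nz(3,4,1)] ybfz_212_attains[OF nz(3,4,2)] by auto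
  moreover have "unitri x s z \<in> GL3O"
    using xs z laurentO_consts by (auto intro: unitri_GL3O)
  moreover have "u = matrix_inv (unitri a c b) ** unitri x s z"
    unfolding u matrix_inv_unitri unitri_mult unitri_eq_iff
    by (simp add: a_c_def b_def algebra_simps)
  ultimately show ?thesis using GL3O_coset_eq by blast
qed

end
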